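(* Let $n\geqslant 2$ and $\alpha\in\mathbf{I}\mathbb{N}_{\infty}^n$. Then there exist a unique element $\sigma_\alpha$ of the group of units $H(\mathbb{I})$ and unique idempotents $\varepsilon_{l(\alpha)},\varepsilon_{r(\alpha)}$ of $\mathbf{I}\mathbb{N}_{\infty}^n$ such that $\alpha=\sigma_\alpha\varepsilon_{l(\alpha)}=\varepsilon_{r(\alpha)}\sigma_\alpha$.
   Context: $\mathbb{N}=\{1,2,3,\ldots\}$, $n\geqslant 2$, and $\mathbb{N}^n$ carries the Euclidean metric $d$. A partial isometry of $\mathbb{N}^n$ is an injective partial map $\alpha\colon\mathbb{N}^n\rightharpoonup\mathbb{N}^n$ with $d((\mathbf{x})\alpha,(\mathbf{y})\alpha)=d(\mathbf{x},\mathbf{y})$ for all $\mathbf{x},\mathbf{y}\in\operatorname{dom}\alpha$; it is cofinite if $\mathbb{N}^n\setminus\operatorname{dom}\alpha$ and $\mathbb{N}^n\setminus\operatorname{ran}\alpha$ are finite. $\mathbf{I}\mathbb{N}_{\infty}^n$ is the monoid of all partial cofinite isometries of $\mathbb{N}^n$ under composition of partial maps written on the right: $\mathbf{x}(\alpha\beta)=(\mathbf{x}\alpha)\beta$ with $\operatorname{dom}(\alpha\beta)=\{\mathbf{x}\in\operatorname{dom}\alpha\colon \mathbf{x}\alpha\in\operatorname{dom}\beta\}$. Its identity is the identity map $\mathbb{I}$ of $\mathbb{N}^n$ and $H(\mathbb{I})$ is its group of units. *)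

theory Defs
  imports Complex_Main
begin

definition pts :: "nat \<Rightarrow> nat list set" where
  "pts n = {x. length x = n \<and> (\<forall>i\<in>set x. 1 \<le> i)}"

definition edist :: "nat list \<Rightarrow> nat list \<Rightarrow> real" where
  "edist x y = sqrt (\<Sum>i<length x. (real (x ! i) - real (y ! i))\<^sup>2)"

text \<open>Partial maps of N^n, composed on the right: x(\<alpha>\<beta>) = (x\<alpha>)\<beta>.\<close>
definition pcomp :: "(nat list \<rightharpoonup> nat list) \<Rightarrow> (nat list \<rightharpoonup> nat list) \<Rightarrow> (nat list \<rightharpoonup> nat list)"
  (infixl "\<cdot>" 70) where
  "\<alpha> \<cdot> \<beta> = \<beta> \<circ>\<^sub>m \<alpha>"

definition partial_isometry :: "nat \<Rightarrow> (nat list \<rightharpoonup> nat list) \<Rightarrow> bool" where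
  "partial_isometry n \<alpha> \<longleftrightarrow> dom \<alpha> \<subseteq> pts n \<and> ran \<alpha> \<subseteq> pts n \<and> inj_on \<alpha> (dom \<alpha>) \<and>
     (\<forall>x\<in>dom \<alpha>. \<forall>y\<in>dom \<alpha>. edist (the (\<alpha> x)) (the (\<alpha> y)) = edist x y)"

definition INinf :: "nat \<Rightarrow> (nat list \<rightharpoonup> nat list) set" where
  "INinf n = {\<alpha>. partial_isometry n \<alpha> \<and> finite (pts n - dom \<alpha>) \<and> finite (pts n - ran \<alpha>)}"

definition idN :: "nat \<Rightarrow> (nat list \<rightharpoonup> nat list)" where
  "idN n = (\<lambda>x. if x \<in> pts n then Some x else None)"

definition unitsN :: "nat \<Rightarrow> (nat list \<rightharpoonup> nat list) set" where
  "unitsN n = {\<sigma> \<in> INinf n. \<exists>\<tau>\<in>INinf n. \<sigma> \<cdot> \<tau> = idN n \<and> \<tau> \<cdot> \<sigma> = idN n}"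

definition idemN :: "nat \<Rightarrow> (nat list \<rightharpoonup> nat list) set" where
  "idemN n = {\<epsilon> \<in> INinf n. \<epsilon> \<cdot> \<epsilon> = \<epsilon>}"

end

theory Submission
  imports Defs
begin

text \<open>By cofiniteness there is \<open>M\<close> such that every point with a coordinate \<open>\<ge> M\<close> lies in both
  the domain and the range of \<open>\<alpha>\<close>. In particular \<open>\<alpha>\<close> is defined on the frame \<open>q = (M,\<dots>,M)\<close>,
  \<open>q + e\<^sub>i\<close>. Being isometric, \<open>\<alpha>\<close> sends \<open>q + e\<^sub>i\<close> to \<open>w \<plusminus> e\<^sub>\<pi>\<^sub>i\<close> for a permutation \<open>\<pi>\<close>, and the
  distances from the frame force \<open>(x\<alpha>)\<^sub>\<pi>\<^sub>i = w\<^sub>\<pi>\<^sub>i \<plusminus> (x\<^sub>i - M)\<close> on all of \<open>dom \<alpha>\<close>. Since both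
  \<open>dom \<alpha>\<close> and \<open>ran \<alpha>\<close> contain points with a coordinate equal to 1 and points far out, the sign
  is \<open>+\<close> and \<open>w\<^sub>\<pi>\<^sub>i = M\<close>: \<open>\<alpha>\<close> is the restriction of a coordinate permutation \<open>\<sigma>\<close>, and by the same
  rigidity \<open>\<sigma>\<close> is the only unit extending \<open>\<alpha>\<close>. Idempotents are partial identities, so
  \<open>\<alpha> = \<sigma> \<cdot> id(ran \<alpha>) = id(dom \<alpha>) \<cdot> \<sigma>\<close>, and in any factorisation \<open>\<alpha> = \<sigma>' \<cdot> \<epsilon>\<close> or
  \<open>\<alpha> = \<epsilon> \<cdot> \<sigma>'\<close> the unit \<open>\<sigma>'\<close> extends \<open>\<alpha>\<close> and \<open>\<epsilon>\<close> is the identity on \<open>ran \<alpha>\<close> resp. \<open>dom \<alpha>\<close>.\<close>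

definition sqdist :: "nat list \<Rightarrow> nat list \<Rightarrow> real" where
  "sqdist x y = (\<Sum>i<length x. (real (x ! i) - real (y ! i))\<^sup>2)"

lemma edist_eq_iff_sqdist_eq: "edist a b = edist c d \<longleftrightarrow> sqdist a b = sqdist c d"
  by (simp add: edist_def sqdist_def)

lemma sqdist_commute: "length x = length y \<Longrightarrow> sqdist x y = sqdist y x"
  unfolding sqdist_def by (simp add: power2_commute)

lemma sqdist_self [simp]: "sqdist x x = 0"
  unfolding sqdist_def by simp

definition shifted :: "nat list \<Rightarrow> nat \<Rightarrow> real \<Rightarrow> nat list \<Rightarrow> bool" where
  "shifted y j s y' \<longleftrightarrow> length y' = length y \<and> j < length y \<and> real (y' ! j) = real (y ! j) + s \<and>
     (\<forall>l<length y. l \<noteq> j \<longrightarrow> y' ! l = y ! l)"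

definition bump :: "nat list \<Rightarrow> nat \<Rightarrow> nat list" where
  "bump q i = q[i := Suc (q ! i)]"

lemma shifted_bump: "i < length q \<Longrightarrow> shifted q i 1 (bump q i)"
  by (simp add: shifted_def bump_def)

lemma sqdist_shifted:
  assumes "shifted y j s y'" "length x = length y"
  shows "sqdist x y' = sqdist x y - 2 * s * (real (x ! j) - real (y ! j)) + s\<^sup>2"
proof -
  let ?A = "{..<length x}"
  let ?t = "\<lambda>z i. (real (x ! i) - real (z ! i))\<^sup>2"
  have j: "j \<in> ?A" and s: "real (y' ! j) = real (y ! j) + s"
    using assms unfolding shifted_def by auto
  have split: "sqdist x z = ?t z j + (\<Sum>i\<in>?A-{j}. ?t z i)" for z
    unfolding sqdist_def using sum.remove[OF _ j] by simp
  have "(\<Sum>i\<in>?A-{j}. ?t y' i) = (\<Sum>i\<in>?A-{j}. ?t y i)"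
    using assms unfolding shifted_def by (intro sum.cong) auto
  then show ?thesis using s split[of y] split[of y'] by (simp add: power2_eq_square algebra_simps)
qed

lemma sqdist_bump: "i < length q \<Longrightarrow> sqdist (bump q i) q = 1"
  using sqdist_shifted[OF shifted_bump, of i q q] sqdist_commute[of q "bump q i"]
  by (simp add: bump_def)

lemma sqdist_bump_bump:
  assumes "i < length q" "k < length q" "i \<noteq> k"
  shows "sqdist (bump q i) (bump q k) = 2"
  using sqdist_shifted[OF shifted_bump[OF assms(2)], of "bump q i"] assms sqdist_bump[OF assms(1)]
  by (simp add: bump_def)

lemma sqdist_eq_1_imp_shifted:
  assumes "length u = length w" "sqdist u w = 1"
  shows "\<exists>j s. (s = 1 \<or> s = -1) \<and> shifted w j s u"
proof -
  let ?n = "length w"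
  define d where "d l = int (u ! l) - int (w ! l)" for l
  have "real_of_int (\<Sum>l<?n. (d l)\<^sup>2) = sqdist u w"
    unfolding sqdist_def d_def using assms(1) by simp
  hence S: "(\<Sum>l<?n. (d l)\<^sup>2) = 1" using assms(2) by linarith
  obtain j where j: "j < ?n" "d j \<noteq> 0"
    using S by (metis (no_types, lifting) lessThan_iff sum.neutral zero_neq_one zero_power2)
  have jA: "j \<in> {..<?n}" using j by simp
  have S2: "(d j)\<^sup>2 + (\<Sum>l\<in>{..<?n}-{j}. (d l)\<^sup>2) = 1"
    using S sum.remove[OF _ jA, of "\<lambda>l. (d l)\<^sup>2"] by simp
  have rest_nonneg: "(\<Sum>l\<in>{..<?n}-{j}. (d l)\<^sup>2) \<ge> 0" by (intro sum_nonneg) auto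
  have "(d j)\<^sup>2 \<ge> 1" using j(2) by (simp add: power2_eq_square) (smt (verit) mult_le_0_iff)
  hence dj: "(d j)\<^sup>2 = 1" and rest: "(\<Sum>l\<in>{..<?n}-{j}. (d l)\<^sup>2) = 0"
    using S2 rest_nonneg by linarith+
  have "\<forall>l<?n. l \<noteq> j \<longrightarrow> u ! l = w ! l"
    using rest by (subst (asm) sum_nonneg_eq_0_iff) (auto simp: d_def)
  moreover have "d j = 1 \<or> d j = -1" using dj by (simp add: power2_eq_1_iff)
  hence "real (u ! j) = real (w ! j) + 1 \<or> real (u ! j) = real (w ! j) + (-1)"
    unfolding d_def by linarith
  ultimately show ?thesis using j assms(1) unfolding shifted_def by blast
qed

lemma pts_length: "x \<in> pts n \<Longrightarrow> length x = n"
  unfolding pts_def by simp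

lemma partial_isometry_pts:
  assumes "partial_isometry n b" "b x = Some x'"
  shows "x \<in> pts n" "x' \<in> pts n"
  using assms unfolding partial_isometry_def by (auto simp: ran_def)

lemma partial_isometry_sqdist:
  assumes "partial_isometry n b" "b x = Some x'" "b y = Some y'"
  shows "sqdist x' y' = sqdist x y"
proof -
  have "x \<in> dom b" "y \<in> dom b" using assms(2,3) by auto
  then have "edist (the (b x)) (the (b y)) = edist x y"
    using assms(1) unfolding partial_isometry_def by blast
  then show ?thesis using assms by (simp add: edist_eq_iff_sqdist_eq)
qed

text \<open>The directions \<open>\<pi> i\<close> are pairwise different because distinct unit steps from \<open>q\<close> are
  \<open>\<surd>2\<close> apart.\<close>
lemma partial_isometry_frame_directions:
  assumes b: "partial_isometry n b" and bq: "b q = Some w"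
    and bu: "\<forall>i<n. b (bump q i) = Some (u i)"
  obtains \<pi> s where "bij_betw \<pi> {..<n} {..<n}"
    "\<forall>i<n. (s i = 1 \<or> s i = -1) \<and> shifted w (\<pi> i) (s i) (u i)"
proof -
  have lq: "length q = n" and lw: "length w = n"
    using partial_isometry_pts[OF b bq] pts_length by auto
  have lu: "length (u i) = n" if "i < n" for i
    using partial_isometry_pts(2)[OF b] bu that pts_length by blast
  have uw: "sqdist (u i) w = 1" if "i < n" for i
  proof -
    have "sqdist (u i) w = sqdist (bump q i) q"
      using partial_isometry_sqdist[OF b _ bq] bu that by blast
    also have "\<dots> = 1" using sqdist_bump lq that by blast
    finally show ?thesis .
  qed
  have "\<forall>i. \<exists>j s. i < n \<longrightarrow> (s = 1 \<or> s = (-1::real)) \<and> shifted w j s (u i)"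
    using sqdist_eq_1_imp_shifted lu lw uw by metis
  then obtain \<pi> s where H: "\<forall>i<n. (s i = 1 \<or> s i = (-1::real)) \<and> shifted w (\<pi> i) (s i) (u i)"
    by metis
  have into: "\<pi> i < n" if "i < n" for i using H that lw unfolding shifted_def by auto
  have "inj_on \<pi> {..<n}"
  proof (rule inj_onI, rule ccontr)
    fix i k assume ik: "i \<in> {..<n}" "k \<in> {..<n}" "\<pi> i = \<pi> k" "i \<noteq> k"
    have "sqdist (u i) (u k) = sqdist (bump q i) (bump q k)"
      using partial_isometry_sqdist[OF b] bu ik by blast
    also have "\<dots> = 2" using sqdist_bump_bump lq ik by blast
    finally have "sqdist (u i) (u k) = 2" .
    moreover have "sqdist (u i) (u k) = sqdist (u i) w - 2 * s k * (real (u i ! \<pi> k) - real (w ! \<pi> k)) + (s k)\<^sup>2"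
      using sqdist_shifted[of w "\<pi> k" "s k" "u k" "u i"] H ik lu lw by auto
    moreover have "real (u i ! \<pi> k) = real (w ! \<pi> k) + s i"
      using H ik unfolding shifted_def by auto
    ultimately have "2 = 1 - 2 * s k * s i + (s k)\<^sup>2" using uw ik by simp
    moreover have "s i = 1 \<or> s i = -1" "s k = 1 \<or> s k = -1" using H ik by auto
    ultimately show False by (auto simp: power2_eq_square)
  qed
  moreover have "\<pi> ` {..<n} = {..<n}"
    using endo_inj_surj[OF _ _ \<open>inj_on \<pi> {..<n}\<close>] into by auto
  ultimately show ?thesis using that H unfolding bij_betw_def by blast
qed

text \<open>Subtract the squared distances of \<open>x\<close> from \<open>q\<close> and from \<open>q + e\<^sub>i\<close>, and likewise for the
  images \<open>z\<close>, \<open>w\<close> and \<open>u i = w + s\<^sub>i e\<^sub>\<pi>\<^sub>i\<close>.\<close>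
lemma partial_isometry_frame_coordinate:
  assumes b: "partial_isometry n b" and bq: "b q = Some w"
    and bu: "\<forall>i<n. b (bump q i) = Some (u i)"
    and H: "\<forall>i<n. (s i = 1 \<or> s i = -1) \<and> shifted w (\<pi> i) (s i) (u i)"
    and bx: "b x = Some z" and i: "i < n"
  shows "real (z ! \<pi> i) = real (w ! \<pi> i) + s i * (real (x ! i) - real (q ! i))"
proof -
  have lz: "length z = n" and lx: "length x = n" and lw: "length w = n" and lq: "length q = n"
    using partial_isometry_pts[OF b bx] partial_isometry_pts[OF b bq] pts_length by auto
  have Hi: "s i = 1 \<or> s i = -1" "shifted w (\<pi> i) (s i) (u i)" using H i by auto
  have "sqdist z (u i) = sqdist x (bump q i)"
    using partial_isometry_sqdist[OF b bx] bu i by simp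
  moreover have "sqdist z w = sqdist x q" using partial_isometry_sqdist[OF b bx bq] .
  moreover have "sqdist x (bump q i) = sqdist x q - 2 * (real (x ! i) - real (q ! i)) + 1"
    using sqdist_shifted[OF shifted_bump, of i q x] lx lq i by simp
  moreover have "sqdist z (u i) = sqdist z w - 2 * s i * (real (z ! \<pi> i) - real (w ! \<pi> i)) + (s i)\<^sup>2"
    using sqdist_shifted[OF Hi(2)] lz lw by simp
  ultimately show ?thesis using Hi(1) by (elim disjE) simp_all
qed

lemma partial_isometries_agree_beyond_frame:
  assumes b: "partial_isometry n b" and c: "partial_isometry n c"
    and bq: "b q = Some w" and cq: "c q = Some w"
    and frame: "\<forall>i<n. bump q i \<in> dom b \<and> c (bump q i) = b (bump q i)"
    and bx: "b x = Some z" and cx: "c x = Some z'"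
  shows "z = z'"
proof -
  define u where "u i = the (b (bump q i))" for i
  have bu: "\<forall>i<n. b (bump q i) = Some (u i)" using frame by (auto simp: u_def)
  with frame have cu: "\<forall>i<n. c (bump q i) = Some (u i)" by auto
  obtain \<pi> s where \<pi>: "bij_betw \<pi> {..<n} {..<n}"
    and H: "\<forall>i<n. (s i = 1 \<or> s i = -1) \<and> shifted w (\<pi> i) (s i) (u i)"
    using partial_isometry_frame_directions[OF b bq bu] by blast
  have "z ! \<pi> i = z' ! \<pi> i" if "i < n" for i
    using partial_isometry_frame_coordinate[OF b bq bu H bx that]
      partial_isometry_frame_coordinate[OF c cq cu H cx that] by simp
  moreover have "j \<in> \<pi> ` {..<n}" if "j < n" for j
    using that bij_betw_imp_surj_on[OF \<pi>] by simp
  ultimately have "z ! j = z' ! j" if "j < n" for j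
    using that by blast
  moreover have "length z = n" "length z' = n"
    using partial_isometry_pts(2)[OF b bx] partial_isometry_pts(2)[OF c cx] pts_length by auto
  ultimately show ?thesis by (simp add: nth_equalityI)
qed

lemma bump_in_pts: "q \<in> pts n \<Longrightarrow> bump q i \<in> pts n"
  using set_update_subset_insert[of q i "Suc (q ! i)"] unfolding pts_def bump_def by auto

lemma unitsN_dom_ran:
  assumes "\<sigma> \<in> unitsN n"
  shows "dom \<sigma> = pts n" "ran \<sigma> = pts n"
proof -
  obtain \<tau> where \<sigma>\<tau>: "\<tau> \<circ>\<^sub>m \<sigma> = idN n" and \<tau>\<sigma>: "\<sigma> \<circ>\<^sub>m \<tau> = idN n"
    using assms unfolding unitsN_def pcomp_def by auto
  have "dom \<sigma> \<subseteq> pts n" "ran \<sigma> \<subseteq> pts n"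
    using assms unfolding unitsN_def INinf_def partial_isometry_def by auto
  moreover have "x \<in> dom \<sigma> \<and> x \<in> ran \<sigma>" if "x \<in> pts n" for x
  proof -
    have "(\<tau> \<circ>\<^sub>m \<sigma>) x = Some x" "(\<sigma> \<circ>\<^sub>m \<tau>) x = Some x"
      using that \<sigma>\<tau> \<tau>\<sigma> by (simp_all add: idN_def)
    then show ?thesis by (auto simp: map_comp_def ran_def split: option.splits)
  qed
  ultimately show "dom \<sigma> = pts n" "ran \<sigma> = pts n" by blast+
qed

lemma unitsN_eq_if_agree_on_frame:
  assumes \<sigma>: "\<sigma> \<in> unitsN n" and \<sigma>': "\<sigma>' \<in> unitsN n" and q: "q \<in> pts n"
    and agree: "\<sigma>' q = \<sigma> q" "\<forall>i<n. \<sigma>' (bump q i) = \<sigma> (bump q i)"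
  shows "\<sigma>' = \<sigma>"
proof
  fix x
  have iso: "partial_isometry n \<sigma>" "partial_isometry n \<sigma>'"
    using \<sigma> \<sigma>' unfolding unitsN_def INinf_def by auto
  have dom: "dom \<sigma> = pts n" "dom \<sigma>' = pts n"
    using unitsN_dom_ran(1) \<sigma> \<sigma>' by simp_all
  show "\<sigma>' x = \<sigma> x"
  proof (cases "x \<in> pts n")
    case True
    obtain w where w: "\<sigma> q = Some w" using q dom(1) by auto
    have "x \<in> dom \<sigma>" "x \<in> dom \<sigma>'" using True dom by simp_all
    then obtain z z' where z: "\<sigma> x = Some z" and z': "\<sigma>' x = Some z'" by blast
    have "\<forall>i<n. bump q i \<in> dom \<sigma> \<and> \<sigma>' (bump q i) = \<sigma> (bump q i)"
      using bump_in_pts[OF q] dom(1) agree(2) by simp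
    then have "z = z'"
      using partial_isometries_agree_beyond_frame[OF iso w _ _ z z'] w agree(1) by simp
    then show ?thesis using z z' by simp
  next
    case False
    then have "x \<notin> dom \<sigma>" "x \<notin> dom \<sigma>'" using dom by simp_all
    then show ?thesis by (simp add: domIff)
  qed
qed

definition perm_map :: "nat \<Rightarrow> (nat \<Rightarrow> nat) \<Rightarrow> (nat list \<rightharpoonup> nat list)" where
  "perm_map n \<rho> = (\<lambda>x. if x \<in> pts n then Some (map (\<lambda>j. x ! \<rho> j) [0..<n]) else None)"

lemma perm_map_pts: "\<forall>j<n. \<rho> j < n \<Longrightarrow> x \<in> pts n \<Longrightarrow> map (\<lambda>j. x ! \<rho> j) [0..<n] \<in> pts n"
  unfolding pts_def by auto

lemma perm_map_comp:
  assumes "\<forall>i<n. a i < n \<and> b i < n \<and> a (b i) = i"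
  shows "perm_map n a \<cdot> perm_map n b = idN n"
proof
  fix x
  show "(perm_map n a \<cdot> perm_map n b) x = idN n x"
  proof (cases "x \<in> pts n")
    case True
    have "map (\<lambda>i. map (\<lambda>j. x ! a j) [0..<n] ! b i) [0..<n] = x"
      using assms pts_length[OF True] by (intro nth_equalityI) auto
    then show ?thesis using True perm_map_pts[of n a x] assms
      by (simp add: pcomp_def perm_map_def idN_def)
  qed (simp add: pcomp_def perm_map_def idN_def)
qed

lemma bij_lessThan_inverse:
  assumes "bij_betw \<rho> {..<n} {..<n}"
  obtains \<rho>' where "\<forall>i<n. \<rho> i < n \<and> \<rho>' i < n \<and> \<rho> (\<rho>' i) = i \<and> \<rho>' (\<rho> i) = i"
proof
  let ?\<rho>' = "inv_into {..<n} \<rho>"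
  show "\<forall>i<n. \<rho> i < n \<and> ?\<rho>' i < n \<and> \<rho> (?\<rho>' i) = i \<and> ?\<rho>' (\<rho> i) = i"
    using assms bij_betw_inv_into[OF assms] bij_betw_inv_into_left[OF assms]
      bij_betw_inv_into_right[OF assms] by (auto dest: bij_betwE)
qed

lemma sqdist_permute:
  assumes "bij_betw \<rho> {..<n} {..<n}" "length x = n"
  shows "sqdist (map (\<lambda>j. x ! \<rho> j) [0..<n]) (map (\<lambda>j. y ! \<rho> j) [0..<n]) = sqdist x y"
proof -
  have "sqdist (map (\<lambda>j. x ! \<rho> j) [0..<n]) (map (\<lambda>j. y ! \<rho> j) [0..<n])
      = (\<Sum>j<n. (real (x ! \<rho> j) - real (y ! \<rho> j))\<^sup>2)"
    unfolding sqdist_def by (simp add: lessThan_atLeast0)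
  also have "\<dots> = (\<Sum>i<n. (real (x ! i) - real (y ! i))\<^sup>2)"
    using sum.reindex_bij_betw[OF assms(1), of "\<lambda>i. (real (x ! i) - real (y ! i))\<^sup>2"] by simp
  also have "\<dots> = sqdist x y" unfolding sqdist_def using assms(2) by simp
  finally show ?thesis .
qed

lemma perm_map_in_INinf:
  assumes "bij_betw \<rho> {..<n} {..<n}"
  shows "perm_map n \<rho> \<in> INinf n"
proof -
  obtain \<rho>' where H: "\<forall>i<n. \<rho> i < n \<and> \<rho>' i < n \<and> \<rho> (\<rho>' i) = i \<and> \<rho>' (\<rho> i) = i"
    using bij_lessThan_inverse[OF assms] .
  have left: "perm_map n \<rho> \<cdot> perm_map n \<rho>' = idN n" and right: "perm_map n \<rho>' \<cdot> perm_map n \<rho> = idN n"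
    using H by (auto intro: perm_map_comp)
  have dom: "dom (perm_map n \<rho>) = pts n" by (auto simp: perm_map_def split: if_splits)
  have "ran (perm_map n \<rho>) \<subseteq> pts n"
    using perm_map_pts[of n \<rho>] H by (auto simp: perm_map_def ran_def split: if_splits)
  moreover have "pts n \<subseteq> ran (perm_map n \<rho>)"
  proof
    fix y assume "y \<in> pts n"
    then have "(perm_map n \<rho> \<circ>\<^sub>m perm_map n \<rho>') y = Some y"
      using right by (simp add: pcomp_def idN_def)
    then show "y \<in> ran (perm_map n \<rho>)" by (auto simp: map_comp_def ran_def split: option.splits)
  qed
  moreover have "inj_on (perm_map n \<rho>) (pts n)"
  proof (rule inj_onI)
    fix x y assume "x \<in> pts n" "y \<in> pts n" "perm_map n \<rho> x = perm_map n \<rho> y"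
    then have "(perm_map n \<rho> \<cdot> perm_map n \<rho>') x = (perm_map n \<rho> \<cdot> perm_map n \<rho>') y"
      by (simp add: pcomp_def map_comp_def)
    then show "x = y" using left \<open>x \<in> pts n\<close> \<open>y \<in> pts n\<close> by (simp add: idN_def)
  qed
  moreover have "edist (the (perm_map n \<rho> x)) (the (perm_map n \<rho> y)) = edist x y"
    if "x \<in> pts n" "y \<in> pts n" for x y
    using that sqdist_permute[OF assms pts_length[OF that(1)]]
    by (simp add: perm_map_def edist_eq_iff_sqdist_eq)
  ultimately show ?thesis by (simp add: INinf_def partial_isometry_def dom)
qed

lemma perm_map_in_unitsN:
  assumes "bij_betw \<rho> {..<n} {..<n}"
  shows "perm_map n \<rho> \<in> unitsN n"
proof -
  obtain \<rho>' where H: "\<forall>i<n. \<rho> i < n \<and> \<rho>' i < n \<and> \<rho> (\<rho>' i) = i \<and> \<rho>' (\<rho> i) = i"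
    using bij_lessThan_inverse[OF assms] .
  have "bij_betw \<rho>' {..<n} {..<n}"
    by (rule bij_betw_byWitness[where f' = \<rho>]) (use H in auto)
  moreover have "perm_map n \<rho> \<cdot> perm_map n \<rho>' = idN n" "perm_map n \<rho>' \<cdot> perm_map n \<rho> = idN n"
    using H by (auto intro: perm_map_comp)
  ultimately show ?thesis
    using perm_map_in_INinf[OF assms] perm_map_in_INinf unfolding unitsN_def by blast
qed

definition full_beyond :: "nat \<Rightarrow> nat \<Rightarrow> (nat list \<rightharpoonup> nat list) \<Rightarrow> bool" where
  "full_beyond n M \<alpha> \<longleftrightarrow> (\<forall>x\<in>pts n. (\<exists>k<n. M \<le> x ! k) \<longrightarrow> x \<in> dom \<alpha> \<and> x \<in> ran \<alpha>)"

lemma INinf_full_beyond: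
  assumes "\<alpha> \<in> INinf n"
  obtains M :: nat where "1 \<le> M" "full_beyond n M \<alpha>"
proof -
  let ?B = "(pts n - dom \<alpha>) \<union> (pts n - ran \<alpha>)"
  have "finite (\<Union> (set ` ?B))" using assms unfolding INinf_def by auto
  then obtain m where m: "\<forall>v\<in>\<Union> (set ` ?B). v < m" using finite_nat_set_iff_bounded by blast
  have "x \<in> dom \<alpha> \<and> x \<in> ran \<alpha>" if "x \<in> pts n" "k < n" "Suc m \<le> x ! k" for x k
  proof (rule ccontr)
    assume "\<not> (x \<in> dom \<alpha> \<and> x \<in> ran \<alpha>)"
    moreover have "x ! k \<in> set x" using that pts_length[OF that(1)] by simp
    ultimately have "x ! k < m" using m that(1) by blast
    then show False using that(3) by simp
  qed
  then show ?thesis by (intro that[of "Suc m"]) (auto simp: full_beyond_def)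
qed

lemma replicate_update_in_pts: "1 \<le> M \<Longrightarrow> 1 \<le> v \<Longrightarrow> (replicate n M)[i := v] \<in> pts n"
  using set_update_subset_insert[of "replicate n M" i v] unfolding pts_def by auto

lemma frame_in_dom_if_full_beyond:
  assumes "0 < n" "1 \<le> M"
    and full: "full_beyond n M \<alpha>"
  shows "replicate n M \<in> dom \<alpha>" "\<forall>i<n. bump (replicate n M) i \<in> dom \<alpha>"
proof -
  have q: "replicate n M \<in> pts n" using assms(2) unfolding pts_def by simp
  then show "replicate n M \<in> dom \<alpha>" using full assms(1) unfolding full_beyond_def by fastforce
  show "\<forall>i<n. bump (replicate n M) i \<in> dom \<alpha>"
  proof (intro allI impI)
    fix i assume "i < n"
    moreover have "M \<le> bump (replicate n M) i ! i" using \<open>i < n\<close> by (simp add: bump_def)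
    ultimately show "bump (replicate n M) i \<in> dom \<alpha>" using full bump_in_pts[OF q] unfolding full_beyond_def by blast
  qed
qed

text \<open>Points with a coordinate equal to \<open>1\<close> in the domain and in the range pin the translation
  part down, and far-out points pin the sign.\<close>
lemma affine_coordinate_is_identity:
  assumes n: "2 \<le> n" and ij: "i < n" "j < n" and M: "1 \<le> M"
    and full: "full_beyond n M \<alpha>"
    and \<alpha>: "partial_isometry n \<alpha>"
    and affine: "\<And>x z. \<alpha> x = Some z \<Longrightarrow> real (z ! j) = real c + s * (real (x ! i) - real d)"
    and s: "s = 1 \<or> s = -1"
  shows "s = 1" "c = d"
proof -
  have other: "\<exists>k<n. k \<noteq> l" for l
    using n by (cases "l = 0") (auto intro: exI[of _ 1] exI[of _ 0])
  show "s = 1"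
  proof (rule ccontr)
    assume "s \<noteq> 1"
    define T where "T = M + c + d + 1"
    have "replicate n T \<in> pts n" unfolding pts_def T_def by auto
    then obtain z where "\<alpha> (replicate n T) = Some z"
      using full n unfolding T_def full_beyond_def by fastforce
    from affine[OF this] have "real (z ! j) = real c - (real T - real d)"
      using s \<open>s \<noteq> 1\<close> ij by simp
    then show False unfolding T_def by simp
  qed
  then have affine1: "\<And>x z. \<alpha> x = Some z \<Longrightarrow> real (z ! j) = real c + real (x ! i) - real d"
    using affine by simp
  obtain k where k: "k < n" "k \<noteq> i" using other by blast
  let ?x = "(replicate n M)[i := 1]"
  obtain z where z: "\<alpha> ?x = Some z"
    using full replicate_update_in_pts[OF M, of 1 n i] k unfolding full_beyond_def by fastforce
  have "1 \<le> z ! j" using partial_isometry_pts(2)[OF \<alpha> z] ij unfolding pts_def by simp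
  then have "d \<le> c" using affine1[OF z] ij by simp
  obtain k' where k': "k' < n" "k' \<noteq> j" using other by blast
  let ?y = "(replicate n M)[j := 1]"
  obtain x where x: "\<alpha> x = Some ?y"
    using full replicate_update_in_pts[OF M, of 1 n j] k' unfolding full_beyond_def
    by (fastforce simp: ran_def)
  have "1 \<le> x ! i" using partial_isometry_pts(1)[OF \<alpha> x] ij unfolding pts_def by simp
  then have "c \<le> d" using affine1[OF x] ij by simp
  with \<open>d \<le> c\<close> show "c = d" by simp
qed

lemma partial_isometry_le_perm_map:
  assumes n: "2 \<le> n" and \<alpha>: "partial_isometry n \<alpha>" and M: "1 \<le> M"
    and full: "full_beyond n M \<alpha>"
  obtains \<rho> where "bij_betw \<rho> {..<n} {..<n}" "\<alpha> \<subseteq>\<^sub>m perm_map n \<rho>"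
proof -
  let ?q = "replicate n M"
  note frame = frame_in_dom_if_full_beyond[OF _ M full]
  obtain w where w: "\<alpha> ?q = Some w" using frame(1) n by auto
  define u where "u i = the (\<alpha> (bump ?q i))" for i
  have u: "\<forall>i<n. \<alpha> (bump ?q i) = Some (u i)" using frame(2) n by (auto simp: u_def)
  obtain \<pi> s where \<pi>: "bij_betw \<pi> {..<n} {..<n}"
    and H: "\<forall>i<n. (s i = 1 \<or> s i = -1) \<and> shifted w (\<pi> i) (s i) (u i)"
    using partial_isometry_frame_directions[OF \<alpha> w u] by blast
  have coord: "z ! \<pi> i = x ! i" if "\<alpha> x = Some z" "i < n" for x z i
  proof -
    note affine = partial_isometry_frame_coordinate[OF \<alpha> w u H _ \<open>i < n\<close>]
    have "\<pi> i < n" using \<pi> \<open>i < n\<close> by (auto dest: bij_betwE)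
    then have "s i = 1" "w ! \<pi> i = ?q ! i"
      using affine_coordinate_is_identity[OF n \<open>i < n\<close> _ M full \<alpha> affine] H \<open>i < n\<close> by auto
    then show ?thesis using affine[OF that(1)] by simp
  qed
  let ?\<rho> = "inv_into {..<n} \<pi>"
  have "\<alpha> x = perm_map n ?\<rho> x" if "\<alpha> x = Some z" for x z
  proof -
    have "length z = n" "x \<in> pts n"
      using partial_isometry_pts[OF \<alpha> that] pts_length by auto
    moreover have "z ! j = x ! ?\<rho> j" if "j < n" for j
      using coord[OF \<open>\<alpha> x = Some z\<close>, of "?\<rho> j"] that bij_betw_inv_into_right[OF \<pi>]
        bij_betwE[OF bij_betw_inv_into[OF \<pi>]] by simp
    ultimately show ?thesis
      using that by (auto simp: perm_map_def intro: nth_equalityI)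
  qed
  then have "\<alpha> \<subseteq>\<^sub>m perm_map n ?\<rho>" by (auto simp: map_le_def)
  then show ?thesis using that[OF bij_betw_inv_into[OF \<pi>]] by blast
qed

lemma INinf_unique_unit_extension:
  assumes n: "2 \<le> n" and \<alpha>: "\<alpha> \<in> INinf n"
  shows "\<exists>!\<sigma>. \<sigma> \<in> unitsN n \<and> \<alpha> \<subseteq>\<^sub>m \<sigma>"
proof -
  have iso: "partial_isometry n \<alpha>" using \<alpha> unfolding INinf_def by simp
  obtain M where M: "1 \<le> M" and full: "full_beyond n M \<alpha>"
    using INinf_full_beyond[OF \<alpha>] by blast
  obtain \<rho> where \<rho>: "bij_betw \<rho> {..<n} {..<n}" and le: "\<alpha> \<subseteq>\<^sub>m perm_map n \<rho>"
    using partial_isometry_le_perm_map[OF n iso M full] by blast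
  let ?q = "replicate n M"
  have q: "?q \<in> pts n" using M unfolding pts_def by simp
  have "\<sigma>' = perm_map n \<rho>" if "\<sigma>' \<in> unitsN n" "\<alpha> \<subseteq>\<^sub>m \<sigma>'" for \<sigma>'
  proof (rule unitsN_eq_if_agree_on_frame[OF perm_map_in_unitsN[OF \<rho>] that(1) q])
    note frame = frame_in_dom_if_full_beyond[OF _ M full]
    show "\<sigma>' ?q = perm_map n \<rho> ?q"
      using frame(1) n le that(2) by (simp add: map_le_def)
    show "\<forall>i<n. \<sigma>' (bump ?q i) = perm_map n \<rho> (bump ?q i)"
      using frame(2) le that(2) by (auto simp: map_le_def)
  qed
  then show ?thesis using perm_map_in_unitsN[OF \<rho>] le by blast
qed

definition id_on :: "nat list set \<Rightarrow> (nat list \<rightharpoonup> nat list)" where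
  "id_on A = (\<lambda>x. if x \<in> A then Some x else None)"

lemma dom_id_on [simp]: "dom (id_on A) = A" and ran_id_on [simp]: "ran (id_on A) = A"
  by (auto simp: id_on_def ran_def split: if_splits)

lemma id_on_in_idemN:
  assumes "A \<subseteq> pts n" "finite (pts n - A)"
  shows "id_on A \<in> idemN n"
proof -
  have "inj_on (id_on A) A" by (auto simp: inj_on_def id_on_def)
  moreover have "id_on A \<cdot> id_on A = id_on A" by (auto simp: pcomp_def id_on_def map_comp_def)
  moreover have "\<forall>x\<in>A. \<forall>y\<in>A. edist (the (id_on A x)) (the (id_on A y)) = edist x y"
    by (simp add: id_on_def)
  ultimately show ?thesis using assms by (simp add: idemN_def INinf_def partial_isometry_def)
qed

lemma idemN_eq_id_on_dom:
  assumes "e \<in> idemN n"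
  shows "e = id_on (dom e)"
proof
  fix y
  show "e y = id_on (dom e) y"
  proof (cases "e y")
    case (Some z)
    have "(e \<circ>\<^sub>m e) y = e y" using assms unfolding idemN_def pcomp_def by simp
    then have "e z = Some z" using Some by simp
    moreover have "inj_on e (dom e)"
      using assms unfolding idemN_def INinf_def partial_isometry_def by simp
    ultimately have "z = y" using Some by (metis domI inj_onD)
    then show ?thesis using Some by (simp add: id_on_def domI)
  qed (simp add: id_on_def domIff)
qed

lemma unit_comp_id_on_ran:
  assumes \<sigma>: "\<sigma> \<in> unitsN n" and le: "\<alpha> \<subseteq>\<^sub>m \<sigma>"
  shows "\<alpha> = \<sigma> \<cdot> id_on (ran \<alpha>)"
proof
  fix x
  have inj: "inj_on \<sigma> (dom \<sigma>)" using \<sigma> unfolding unitsN_def INinf_def partial_isometry_def by simp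
  show "\<alpha> x = (\<sigma> \<cdot> id_on (ran \<alpha>)) x"
  proof (cases "\<alpha> x")
    case None
    have "y \<notin> ran \<alpha>" if "\<sigma> x = Some y" for y
    proof
      assume "y \<in> ran \<alpha>"
      then obtain x' where "\<alpha> x' = Some y" by (auto simp: ran_def)
      then have "\<sigma> x' = Some y" using le by (metis domI map_le_def)
      then have "x' = x" using inj that by (metis domI inj_onD)
      with \<open>\<alpha> x' = Some y\<close> None show False by simp
    qed
    then show ?thesis using None by (auto simp: pcomp_def id_on_def map_comp_def split: option.splits)
  next
    case (Some y)
    then have "\<sigma> x = Some y" "y \<in> ran \<alpha>" using le by (metis domI map_le_def, simp add: ranI)
    then show ?thesis using Some by (simp add: pcomp_def id_on_def)
  qed
qed

lemma id_on_dom_comp: "\<alpha> \<subseteq>\<^sub>m \<sigma> \<Longrightarrow> \<alpha> = id_on (dom \<alpha>) \<cdot> \<sigma>"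
  by (auto simp: pcomp_def id_on_def map_le_def map_comp_def fun_eq_iff domIff)

lemma idemN_eq_id_on_subset:
  assumes "e \<in> idemN n"
  obtains D where "e = id_on D" "D \<subseteq> pts n"
  using idemN_eq_id_on_dom[OF assms] assms
  unfolding idemN_def INinf_def partial_isometry_def by blast

lemma unit_idem_factor_unique:
  assumes \<sigma>: "\<sigma> \<in> unitsN n" and e: "e \<in> idemN n" and \<alpha>: "\<alpha> = \<sigma> \<cdot> e"
  shows "\<alpha> \<subseteq>\<^sub>m \<sigma>" "e = id_on (ran \<alpha>)"
proof -
  obtain D where D: "e = id_on D" "D \<subseteq> pts n" using idemN_eq_id_on_subset[OF e] .
  have \<alpha>_Some: "\<alpha> x = Some z \<longleftrightarrow> \<sigma> x = Some z \<and> z \<in> D" for x z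
    using \<alpha> D(1) by (auto simp: pcomp_def id_on_def map_comp_def split: option.splits)
  then show "\<alpha> \<subseteq>\<^sub>m \<sigma>" unfolding map_le_def by (metis domD)
  have "D \<subseteq> ran \<sigma>" using unitsN_dom_ran(2)[OF \<sigma>] D(2) by simp
  then have "ran \<alpha> = D" using \<alpha>_Some unfolding ran_def by blast
  then show "e = id_on (ran \<alpha>)" using D(1) by simp
qed

lemma idem_unit_factor_unique:
  assumes \<sigma>: "\<sigma> \<in> unitsN n" and e: "e \<in> idemN n" and \<alpha>: "\<alpha> = e \<cdot> \<sigma>"
  shows "\<alpha> \<subseteq>\<^sub>m \<sigma>" "e = id_on (dom \<alpha>)"
proof -
  obtain D where D: "e = id_on D" "D \<subseteq> pts n" using idemN_eq_id_on_subset[OF e] .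
  have \<alpha>_eq: "\<alpha> x = (if x \<in> D then \<sigma> x else None)" for x
    using \<alpha> D(1) by (simp add: pcomp_def id_on_def)
  then show "\<alpha> \<subseteq>\<^sub>m \<sigma>" by (auto simp: map_le_def domIff)
  have "D \<subseteq> dom \<sigma>" using unitsN_dom_ran(1)[OF \<sigma>] D(2) by simp
  then have "dom \<alpha> = D" using \<alpha>_eq by (auto simp: domIff split: if_splits)
  then show "e = id_on (dom \<alpha>)" using D(1) by simp
qed

theorem lemma3p5:
  fixes n :: nat and \<alpha> :: "nat list \<rightharpoonup> nat list"
  assumes "n \<ge> 2" and "\<alpha> \<in> INinf n"
  shows "\<exists>\<sigma> el er. \<sigma> \<in> unitsN n \<and> el \<in> idemN n \<and> er \<in> idemN n \<and>
           \<alpha> = \<sigma> \<cdot> el \<and> \<alpha> = er \<cdot> \<sigma> \<and>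
           (\<forall>\<sigma>' el'. \<sigma>' \<in> unitsN n \<and> el' \<in> idemN n \<and> \<alpha> = \<sigma>' \<cdot> el' \<longrightarrow> \<sigma>' = \<sigma> \<and> el' = el) \<and>
           (\<forall>\<sigma>' er'. \<sigma>' \<in> unitsN n \<and> er' \<in> idemN n \<and> \<alpha> = er' \<cdot> \<sigma>' \<longrightarrow> \<sigma>' = \<sigma> \<and> er' = er)"
proof -
  obtain \<sigma> where \<sigma>: "\<sigma> \<in> unitsN n" "\<alpha> \<subseteq>\<^sub>m \<sigma>"
    and unique: "\<And>\<sigma>'. \<sigma>' \<in> unitsN n \<Longrightarrow> \<alpha> \<subseteq>\<^sub>m \<sigma>' \<Longrightarrow> \<sigma>' = \<sigma>"
    using INinf_unique_unit_extension[OF assms] by blast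
  have "dom \<alpha> \<subseteq> pts n" "ran \<alpha> \<subseteq> pts n" "finite (pts n - dom \<alpha>)" "finite (pts n - ran \<alpha>)"
    using assms(2) unfolding INinf_def partial_isometry_def by auto
  then have "id_on (ran \<alpha>) \<in> idemN n" "id_on (dom \<alpha>) \<in> idemN n"
    by (simp_all add: id_on_in_idemN)
  moreover have "\<alpha> = \<sigma> \<cdot> id_on (ran \<alpha>)" "\<alpha> = id_on (dom \<alpha>) \<cdot> \<sigma>"
    using unit_comp_id_on_ran[OF \<sigma>] id_on_dom_comp[OF \<sigma>(2)] by simp_all
  moreover have "\<sigma>' = \<sigma> \<and> el' = id_on (ran \<alpha>)"
    if "\<sigma>' \<in> unitsN n" "el' \<in> idemN n" "\<alpha> = \<sigma>' \<cdot> el'" for \<sigma>' el'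
    using unit_idem_factor_unique[OF that] unique[OF that(1)] by blast
  moreover have "\<sigma>' = \<sigma> \<and> er' = id_on (dom \<alpha>)"
    if "\<sigma>' \<in> unitsN n" "er' \<in> idemN n" "\<alpha> = er' \<cdot> \<sigma>'" for \<sigma>' er'
    using idem_unit_factor_unique[OF that] unique[OF that(1)] by blast
  ultimately show ?thesis using \<sigma>(1) by blast
qed

end
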